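(* Let $n,n'\in\mathbb{N}$, $\mathbb{K}$ a field, $R=\mathbb{K}[X_1,\ldots,X_n]$, $R'=\mathbb{K}[X_1,\ldots,X_{n'}]$, and $J\subsetneq I\subset R$ monomial ideals. Let $\phi:\mathbb{N}^n\to\mathbb{N}^{n'}$ be a map, $\Phi:R\to R'$ the $\mathbb{K}$-linear map with $\Phi(X^a)=X^{\phi(a)}$ on monomials, and let $I'$, $J'\subset R'$ be the ideals generated by $\Phi(I)$ resp. $\Phi(J)$. Let $\Omega$ be a finite set, let $I/J=\bigoplus_{i\in\Omega}X^{a_i}\mathbb{K}[Z_i]$ be a Stanley decomposition of $I/J$, and let $Z_i'$, $i\in\Omega$, be subsets of $\{X_1,\ldots,X_{n'}\}$. Assume that $\phi$ is injective, monotonic and preserves joins, and that \[\Phi(X^{a_i})\mathbb{K}[Z_i']\cap\Phi(R)=\Phi(X^{a_i}\mathbb{K}[Z_i])\quad\text{for each } i\in\Omega.\] Let $V=\sum_{i\in\Omega}\Phi(X^{a_i})\mathbb{K}[Z_i']$ as a graded vector space. Then this sum is direct, $V=\bigoplus_{i\in\Omega}\Phi(X^{a_i})\mathbb{K}[Z_i']$, and $V\subset I'/J'$ (i.e. $V$ is spanned by monomials lying in $I'\setminus J'$).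
   Context: $\mathbb{N}^n$ carries the componentwise partial order, with join $\vee$ the componentwise maximum; monotonic means order-preserving; preserving joins means $\phi(a\vee b)=\phi(a)\vee\phi(b)$. A Stanley decomposition of $I/J$ (fine multigrading) is a finite family of pairs $(\mathbb{K}[Z_i], X^{a_i})$, with $Z_i$ a subset of the variables and $X^{a_i}\mathbb{K}[Z_i]$ free over $\mathbb{K}[Z_i]$, such that $I/J=\bigoplus_i X^{a_i}\mathbb{K}[Z_i]$ as multigraded $\mathbb{K}$-vector spaces. *)

theory Defs
  imports Main
begin

text \<open>Exponent vectors in N^n: functions nat => nat vanishing from index n on.
  Variable X_(j+1) corresponds to index j < n.  The componentwise order and the
  join (componentwise max) are the library's pointwise order / sup on functions.\<close>

definition vecs :: "nat \<Rightarrow> (nat \<Rightarrow> nat) set" where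
  "vecs n = {a. \<forall>j\<ge>n. a j = 0}"

text \<open>A monomial ideal of K[X_1..X_n], represented by the set of exponents of the
  monomials it contains (an upward closed subset of N^n).\<close>
definition monomial_ideal :: "nat \<Rightarrow> (nat \<Rightarrow> nat) set \<Rightarrow> bool" where
  "monomial_ideal n M \<longleftrightarrow> M \<subseteq> vecs n \<and> (\<forall>a\<in>M. \<forall>b\<in>vecs n. a \<le> b \<longrightarrow> b \<in> M)"

text \<open>Monomials of the ideal of K[X_1..X_n] generated by the monomials with exponents in S.\<close>
definition gen_ideal :: "nat \<Rightarrow> (nat \<Rightarrow> nat) set \<Rightarrow> (nat \<Rightarrow> nat) set" where
  "gen_ideal n S = {b \<in> vecs n. \<exists>s\<in>S. s \<le> b}"

text \<open>Monomials of X^a K[Z], Z a set of variable indices.\<close>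
definition cone :: "nat \<Rightarrow> (nat \<Rightarrow> nat) \<Rightarrow> nat set \<Rightarrow> (nat \<Rightarrow> nat) set" where
  "cone n a Z = {(\<lambda>j. a j + b j) | b. b \<in> vecs n \<and> (\<forall>j. j \<notin> Z \<longrightarrow> b j = 0)}"

text \<open>Stanley decomposition I/J = (+)_{i in Omega} X^(a i) K[Z i] (fine multigrading):
  since all spaces are spanned by monomials, this says the monomial sets of the
  summands are pairwise disjoint and their union is the set of monomials in I minus J.\<close>
definition stanley_decomp ::
  "nat \<Rightarrow> (nat \<Rightarrow> nat) set \<Rightarrow> (nat \<Rightarrow> nat) set \<Rightarrow> 'i set \<Rightarrow> ('i \<Rightarrow> nat \<Rightarrow> nat) \<Rightarrow> ('i \<Rightarrow> nat set) \<Rightarrow> bool" where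
  "stanley_decomp n I J \<Omega> a Z \<longleftrightarrow>
     finite \<Omega> \<and> (\<forall>i\<in>\<Omega>. a i \<in> vecs n \<and> Z i \<subseteq> {..<n}) \<and>
     (\<forall>i\<in>\<Omega>. \<forall>j\<in>\<Omega>. i \<noteq> j \<longrightarrow> cone n (a i) (Z i) \<inter> cone n (a j) (Z j) = {}) \<and>
     (\<Union>i\<in>\<Omega>. cone n (a i) (Z i)) = I - J"

end

theory Submission
  imports Defs
begin

text \<open>If a monomial c of R' lies in the cone \<Phi>(X^p) K[Z'] and is divisible by \<Phi>(X^x), then it
  is divisible by the join \<phi>(p) \<squnion> \<phi>(x) = \<phi>(p \<squnion> x), so
  \<phi>(p \<squnion> x) lies in that cone and in the image of \<phi>; the intersection hypothesis and injectivity
  pull this back to p \<squnion> x \<in> X^p K[Z]. A monomial common to two image cones therefore puts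
  a_i \<squnion> a_j into both source cones, contradicting disjointness; and a monomial of an image cone
  divisible by \<phi>(s) with s \<in> J puts a_i \<squnion> s \<in> J into a source cone, contradicting that the
  source cones avoid J.\<close>

lemma sup_mem_vecs: "x \<in> vecs m \<Longrightarrow> y \<in> vecs m \<Longrightarrow> sup x y \<in> vecs m"
  by (simp add: vecs_def)

lemma cone_lower_bound: "c \<in> cone m p Z \<Longrightarrow> p \<le> c"
  unfolding cone_def by (auto simp: le_fun_def)

lemma cone_subset_vecs: "p \<in> vecs m \<Longrightarrow> cone m p Z \<subseteq> vecs m"
  unfolding cone_def vecs_def by auto

lemma self_mem_cone:
  assumes "p \<in> vecs m" shows "p \<in> cone m p Z"
  unfolding cone_def mem_Collect_eq by (rule exI[of _ "\<lambda>_. 0"]) (simp add: vecs_def)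

lemma sup_mem_cone:
  assumes p: "p \<in> vecs m" and q: "q \<in> vecs m" and c: "c \<in> cone m p Z" and qc: "q \<le> c"
  shows "sup p q \<in> cone m p Z"
proof -
  obtain b where cb: "c = (\<lambda>j. p j + b j)" and b: "\<forall>j. j \<notin> Z \<longrightarrow> b j = 0"
    using c unfolding cone_def by blast
  define b' where "b' = (\<lambda>j. sup p q j - p j)"
  have "b' \<in> vecs m" using p q unfolding vecs_def b'_def by auto
  moreover have "\<forall>j. j \<notin> Z \<longrightarrow> b' j = 0"
  proof (intro allI impI)
    fix j assume "j \<notin> Z"
    have "q j \<le> p j + b j" using qc by (simp add: cb le_fun_def)
    then have "q j \<le> p j" using b \<open>j \<notin> Z\<close> by simp
    then show "b' j = 0" by (simp add: b'_def)
  qed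
  moreover have "sup p q = (\<lambda>j. p j + b' j)" by (auto simp: b'_def)
  ultimately show ?thesis unfolding cone_def by blast
qed

locale join_embedding =
  fixes n n' :: nat and \<phi> :: "(nat \<Rightarrow> nat) \<Rightarrow> (nat \<Rightarrow> nat)"
  assumes maps_vecs: "\<phi> ` vecs n \<subseteq> vecs n'"
    and inj: "inj_on \<phi> (vecs n)"
    and preserves_sup: "\<And>x y. x \<in> vecs n \<Longrightarrow> y \<in> vecs n \<Longrightarrow> \<phi> (sup x y) = sup (\<phi> x) (\<phi> y)"
begin

lemma sup_mem_cone_if_image_cone_le:
  assumes cap: "cone n' (\<phi> p) Z' \<inter> \<phi> ` vecs n = \<phi> ` cone n p Z"
    and p: "p \<in> vecs n" and x: "x \<in> vecs n"
    and c: "c \<in> cone n' (\<phi> p) Z'" and le: "\<phi> x \<le> c"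
  shows "sup p x \<in> cone n p Z"
proof -
  have px: "sup p x \<in> vecs n" using p x by (rule sup_mem_vecs)
  have "\<phi> (sup p x) = sup (\<phi> p) (\<phi> x)" using p x by (rule preserves_sup)
  also have "\<dots> \<in> cone n' (\<phi> p) Z'"
    using p x maps_vecs by (intro sup_mem_cone[OF _ _ c le]) auto
  finally have "\<phi> (sup p x) \<in> \<phi> ` cone n p Z" using px cap by blast
  then obtain y where y: "y \<in> cone n p Z" and "\<phi> (sup p x) = \<phi> y" by blast
  moreover have "y \<in> vecs n" using y cone_subset_vecs[OF p] by blast
  ultimately show ?thesis using inj px by (metis inj_on_def)
qed

lemma image_cones_disjoint:
  assumes cap_p: "cone n' (\<phi> p) Y \<inter> \<phi> ` vecs n = \<phi> ` cone n p Z"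
    and cap_q: "cone n' (\<phi> q) Y' \<inter> \<phi> ` vecs n = \<phi> ` cone n q Z'"
    and p: "p \<in> vecs n" and q: "q \<in> vecs n"
    and disj: "cone n p Z \<inter> cone n q Z' = {}"
  shows "cone n' (\<phi> p) Y \<inter> cone n' (\<phi> q) Y' = {}"
proof (rule ccontr)
  assume "cone n' (\<phi> p) Y \<inter> cone n' (\<phi> q) Y' \<noteq> {}"
  then obtain c where cp: "c \<in> cone n' (\<phi> p) Y" and cq: "c \<in> cone n' (\<phi> q) Y'" by blast
  have "sup p q \<in> cone n p Z"
    using sup_mem_cone_if_image_cone_le[OF cap_p p q cp cone_lower_bound[OF cq]] .
  moreover have "sup p q \<in> cone n q Z'"
    using sup_mem_cone_if_image_cone_le[OF cap_q q p cq cone_lower_bound[OF cp]]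
    by (simp add: sup_commute)
  ultimately show False using disj by blast
qed

lemma image_cone_subset_gen_ideal_diff:
  assumes cap: "cone n' (\<phi> p) Y \<inter> \<phi> ` vecs n = \<phi> ` cone n p Z"
    and p: "p \<in> vecs n" and J: "monomial_ideal n J" and cone: "cone n p Z \<subseteq> I - J"
  shows "cone n' (\<phi> p) Y \<subseteq> gen_ideal n' (\<phi> ` I) - gen_ideal n' (\<phi> ` J)"
proof
  fix c assume c: "c \<in> cone n' (\<phi> p) Y"
  have "c \<in> vecs n'" using c cone_subset_vecs p maps_vecs by blast
  moreover have "p \<in> I" using cone self_mem_cone[OF p] by blast
  ultimately have "c \<in> gen_ideal n' (\<phi> ` I)"
    unfolding gen_ideal_def using cone_lower_bound[OF c] by blast
  moreover have "c \<notin> gen_ideal n' (\<phi> ` J)"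
  proof
    assume "c \<in> gen_ideal n' (\<phi> ` J)"
    then obtain s where s: "s \<in> J" "\<phi> s \<le> c" unfolding gen_ideal_def by blast
    have sv: "s \<in> vecs n" using J s(1) unfolding monomial_ideal_def by blast
    have "sup p s \<in> J"
      using J s(1) sup_mem_vecs[OF p sv] unfolding monomial_ideal_def by auto
    moreover have "sup p s \<in> cone n p Z"
      using sup_mem_cone_if_image_cone_le[OF cap p sv c s(2)] .
    ultimately show False using cone by blast
  qed
  ultimately show "c \<in> gen_ideal n' (\<phi> ` I) - gen_ideal n' (\<phi> ` J)" by blast
qed

end

theorem lemma4p2:
  fixes n n' :: nat
    and I J :: "(nat \<Rightarrow> nat) set"
    and \<phi> :: "(nat \<Rightarrow> nat) \<Rightarrow> (nat \<Rightarrow> nat)"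
    and \<Omega> :: "'i set"
    and a :: "'i \<Rightarrow> nat \<Rightarrow> nat"
    and Z Z' :: "'i \<Rightarrow> nat set"
  assumes I: "monomial_ideal n I" and J: "monomial_ideal n J" and JI: "J \<subset> I"
    and phi_map: "\<phi> ` vecs n \<subseteq> vecs n'"
    and fin: "finite \<Omega>"
    and SD: "stanley_decomp n I J \<Omega> a Z"
    and Z': "\<forall>i\<in>\<Omega>. Z' i \<subseteq> {..<n'}"
    and inj: "inj_on \<phi> (vecs n)"
    and mono: "mono_on (vecs n) \<phi>"
    and join: "\<forall>x\<in>vecs n. \<forall>y\<in>vecs n. \<phi> (sup x y) = sup (\<phi> x) (\<phi> y)"
    and cap: "\<forall>i\<in>\<Omega>. cone n' (\<phi> (a i)) (Z' i) \<inter> \<phi> ` vecs n = \<phi> ` cone n (a i) (Z i)"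
  shows "(\<forall>i\<in>\<Omega>. \<forall>j\<in>\<Omega>. i \<noteq> j \<longrightarrow> cone n' (\<phi> (a i)) (Z' i) \<inter> cone n' (\<phi> (a j)) (Z' j) = {})
       \<and> (\<Union>i\<in>\<Omega>. cone n' (\<phi> (a i)) (Z' i)) \<subseteq> gen_ideal n' (\<phi> ` I) - gen_ideal n' (\<phi> ` J)"
proof -
  interpret join_embedding n n' \<phi>
    using phi_map inj join by unfold_locales auto
  have a: "\<forall>i\<in>\<Omega>. a i \<in> vecs n"
    and disj: "\<forall>i\<in>\<Omega>. \<forall>j\<in>\<Omega>. i \<noteq> j \<longrightarrow> cone n (a i) (Z i) \<inter> cone n (a j) (Z j) = {}"
    and cover: "(\<Union>i\<in>\<Omega>. cone n (a i) (Z i)) = I - J"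
    using SD unfolding stanley_decomp_def by auto
  have "cone n' (\<phi> (a i)) (Z' i) \<inter> cone n' (\<phi> (a j)) (Z' j) = {}"
    if "i \<in> \<Omega>" "j \<in> \<Omega>" "i \<noteq> j" for i j
    using image_cones_disjoint[OF cap[rule_format] cap[rule_format] a[rule_format] a[rule_format]]
      disj that by blast
  moreover have "cone n' (\<phi> (a i)) (Z' i) \<subseteq> gen_ideal n' (\<phi> ` I) - gen_ideal n' (\<phi> ` J)"
    if "i \<in> \<Omega>" for i
  proof (rule image_cone_subset_gen_ideal_diff[OF _ _ J])
    show "cone n (a i) (Z i) \<subseteq> I - J" using cover that by blast
  qed (use that a cap in blast)+
  ultimately show ?thesis by blast
qed

end
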